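(* Let $(A,q)$ be a metric group and let $n$ be the exponent of $A$. Then $(A,q)$ is isotropically generated if and only if (i) $q^n=1$, and (ii) $(A,q)$ contains a hyperbolic metric subgroup isomorphic to $(\mathbb{Z}/n\mathbb{Z}\times\mathbb{Z}/n\mathbb{Z},h)$, where $h(x,y)=\zeta^{xy}$ for a primitive $n$th root of unity $\zeta$.
   Context: $k$ is an algebraically closed field of characteristic $0$. A pre-metric group $(A,q)$ is a finite Abelian group $A$ with a quadratic form $q:A\to k^\times$; it is a metric group if $q$ is non-degenerate (its associated bilinear form $B(x,y)=q(x+y)/(q(x)q(y))$ is non-degenerate). $x\in A$ is isotropic if $q(x)=1$; $(A,q)$ is isotropically generated if $A$ is generated by its isotropic elements. A metric subgroup isomorphic to $(\mathbb{Z}/n\mathbb{Z}\times\mathbb{Z}/n\mathbb{Z},h)$ means a subgroup on which the restriction of $q$ is isomorphic to $h$. *)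

theory Defs
  imports "HOL-Computational_Algebra.Polynomial"
begin

definition alg_closed :: "'k::field itself \<Rightarrow> bool" where
  "alg_closed _ \<longleftrightarrow> (\<forall>p::'k poly. degree p > 0 \<longrightarrow> (\<exists>x. poly p x = 0))"

definition natmul :: "nat \<Rightarrow> 'a::ab_group_add \<Rightarrow> 'a" where
  "natmul n x = (((+) x) ^^ n) 0"

definition group_exponent :: "'a::{ab_group_add,finite} itself \<Rightarrow> nat" where
  "group_exponent _ = (LEAST n. n > 0 \<and> (\<forall>x::'a. natmul n x = 0))"

definition is_subgroup :: "'a::ab_group_add set \<Rightarrow> bool" where
  "is_subgroup H \<longleftrightarrow> 0 \<in> H \<and> (\<forall>x\<in>H. \<forall>y\<in>H. x + y \<in> H) \<and> (\<forall>x\<in>H. - x \<in> H)"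

definition generated_subgroup :: "'a::ab_group_add set \<Rightarrow> 'a set" where
  "generated_subgroup S = \<Inter>{H. is_subgroup H \<and> S \<subseteq> H}"

definition assoc_bilin :: "('a::ab_group_add \<Rightarrow> 'k::field) \<Rightarrow> 'a \<Rightarrow> 'a \<Rightarrow> 'k" where
  "assoc_bilin q x y = q (x + y) / (q x * q y)"

definition quadratic_form :: "('a::ab_group_add \<Rightarrow> 'k::field) \<Rightarrow> bool" where
  "quadratic_form q \<longleftrightarrow> (\<forall>x. q x \<noteq> 0) \<and> (\<forall>x. q (- x) = q x) \<and>
     (\<forall>x y z. assoc_bilin q (x + y) z = assoc_bilin q x z * assoc_bilin q y z) \<and>
     (\<forall>x y z. assoc_bilin q x (y + z) = assoc_bilin q x y * assoc_bilin q x z)"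

definition nondegenerate :: "('a::ab_group_add \<Rightarrow> 'k::field) \<Rightarrow> bool" where
  "nondegenerate q \<longleftrightarrow> (\<forall>x. (\<forall>y. assoc_bilin q x y = 1) \<longrightarrow> x = 0)"

definition metric_group :: "('a::{ab_group_add,finite} \<Rightarrow> 'k::field) \<Rightarrow> bool" where
  "metric_group q \<longleftrightarrow> quadratic_form q \<and> nondegenerate q"

definition isotropically_generated :: "('a::ab_group_add \<Rightarrow> 'k::field) \<Rightarrow> bool" where
  "isotropically_generated q \<longleftrightarrow> generated_subgroup {x. q x = 1} = UNIV"

definition primitive_root :: "nat \<Rightarrow> 'k::field \<Rightarrow> bool" where
  "primitive_root n z \<longleftrightarrow> z ^ n = 1 \<and> (\<forall>m. 0 < m \<and> m < n \<longrightarrow> z ^ m \<noteq> 1)"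

text \<open>Z/nZ \<times> Z/nZ is modelled by pairs in {..<n} \<times> {..<n} with addition mod n.
  (A,q) contains a metric subgroup isomorphic to (Z/nZ \<times> Z/nZ, h): there is a subgroup H
  and a group isomorphism \<phi> from Z/nZ \<times> Z/nZ onto H with q \<circ> \<phi> = h.\<close>
definition contains_metric_subgroup_iso ::
    "('a::ab_group_add \<Rightarrow> 'k::field) \<Rightarrow> nat \<Rightarrow> (nat \<times> nat \<Rightarrow> 'k) \<Rightarrow> bool" where
  "contains_metric_subgroup_iso q n h \<longleftrightarrow>
     (\<exists>H \<phi>. is_subgroup H \<and> bij_betw \<phi> ({..<n} \<times> {..<n}) H \<and>
        (\<forall>a\<in>{..<n}. \<forall>b\<in>{..<n}. \<forall>c\<in>{..<n}. \<forall>d\<in>{..<n}.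
            \<phi> ((a + c) mod n, (b + d) mod n) = \<phi> (a, b) + \<phi> (c, d)) \<and>
        (\<forall>a\<in>{..<n}. \<forall>b\<in>{..<n}. q (\<phi> (a, b)) = h (a, b)))"

definition hyperbolic_form :: "'k::field \<Rightarrow> nat \<times> nat \<Rightarrow> 'k" where
  "hyperbolic_form \<zeta> = (\<lambda>(x, y). \<zeta> ^ (x * y))"

end

theory Submission
  imports Defs "HOL-Computational_Algebra.Primes"
begin

text \<open>
  If the isotropic elements generate A, then q^n = 1 on all of A, since the elements with
  q^n = 1 form a subgroup. For each prime r dividing n, minimality of the exponent and
  nondegeneracy give isotropic s, t with B(s,t)^(n/r) \<noteq> 1; recombining such pairs along the
  primary decomposition of n yields isotropic x, y for which B(x,y) is a primitive n-th root of
  unity, and then (a,b) \<mapsto> a x + b y embeds the hyperbolic plane.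

  Conversely, let e1, e2 be the standard generators of a hyperbolic plane in A. For any x, the
  values q x, B(x,e1), B(x,e2) are powers \<zeta>^k, \<zeta>^s, \<zeta>^t, and
  q(x + a e1 + b e2) = \<zeta>^(k + ab + sa + tb), so a suitable choice of a, b makes
  x + a e1 + b e2 isotropic. As a e1 and b e2 are isotropic as well, x lies in the subgroup
  generated by the isotropic elements.
\<close>

section \<open>Multiples in an abelian group\<close>

lemma natmul_0 [simp]: "natmul 0 x = 0"
  by (simp add: natmul_def)

lemma natmul_Suc: "natmul (Suc k) x = x + natmul k x"
  by (simp add: natmul_def)

lemma natmul_add: "natmul (a + b) x = natmul a x + natmul b x"
  by (induction a) (simp_all add: natmul_Suc add.assoc)

lemma natmul_mult: "natmul (a * b) x = natmul a (natmul b x)"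
  by (induction a) (simp_all add: natmul_Suc natmul_add)

lemma natmul_zero_right [simp]: "natmul k 0 = 0"
  by (induction k) (simp_all add: natmul_Suc)

lemma natmul_add_right: "natmul k (x + y) = natmul k x + natmul k y"
  by (induction k) (simp_all add: natmul_Suc algebra_simps)

lemma natmul_minus_right: "natmul k (- x) = - natmul k x"
  by (induction k) (simp_all add: natmul_Suc algebra_simps)

lemma natmul_eq_0_if_dvd: "natmul d x = 0 \<Longrightarrow> d dvd m \<Longrightarrow> natmul m x = 0"
  by (auto simp: natmul_mult mult.commute[of d])

lemma natmul_mod:
  assumes "natmul n x = 0"
  shows "natmul (k mod n) x = natmul k x"
proof -
  have "natmul (k div n * n) x = 0"
    by (rule natmul_eq_0_if_dvd[OF assms]) simp
  then show ?thesis
    using natmul_add[of "k div n * n" "k mod n" x] by simp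
qed

lemma natmul_additive_mod:
  assumes additive: "\<And>a c. a < n \<Longrightarrow> c < n \<Longrightarrow> f ((a + c) mod n) = f a + f c"
    and "a < n"
  shows "f a = natmul a (f (1 mod n))"
  using \<open>a < n\<close>
proof (induction a)
  case 0
  then show ?case using additive[of 0 0] by simp
next
  case (Suc a)
  then have "1 mod n = 1" "(a + 1) mod n = Suc a" by simp_all
  then show ?case using Suc additive[of a "1 mod n"] by (simp add: natmul_Suc add.commute)
qed

section \<open>Subgroups and the exponent\<close>

lemma is_subgroup_natmul_kernel: "is_subgroup {x. natmul m x = 0}"
  by (auto simp: is_subgroup_def natmul_add_right natmul_minus_right)

lemma is_subgroup_additive_image:
  fixes \<phi> :: "nat \<times> nat \<Rightarrow> 'a::ab_group_add"
  assumes "n > 0"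
    and additive: "\<And>a b c d. a < n \<Longrightarrow> b < n \<Longrightarrow> c < n \<Longrightarrow> d < n \<Longrightarrow>
      \<phi> ((a + c) mod n, (b + d) mod n) = \<phi> (a, b) + \<phi> (c, d)"
  shows "is_subgroup (\<phi> ` ({..<n} \<times> {..<n}))"
proof -
  have zero: "\<phi> (0, 0) = 0"
    using additive[of 0 0 0 0] \<open>n > 0\<close> by simp
  have minus: "- \<phi> (a, b) = \<phi> ((n - a) mod n, (n - b) mod n)" if "a < n" "b < n" for a b
  proof (rule minus_unique)
    have "(a + (n - a) mod n) mod n = n mod n" "(b + (n - b) mod n) mod n = n mod n"
      using that by (simp_all only: mod_add_right_eq le_add_diff_inverse less_imp_le)
    then show "\<phi> (a, b) + \<phi> ((n - a) mod n, (n - b) mod n) = 0"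
      using additive[OF that, of "(n - a) mod n" "(n - b) mod n"] \<open>n > 0\<close> zero by simp
  qed
  show ?thesis
    unfolding is_subgroup_def
  proof (intro conjI ballI)
    show "0 \<in> \<phi> ` ({..<n} \<times> {..<n})"
      using zero \<open>n > 0\<close> by (intro rev_image_eqI[of "(0, 0)"]) simp_all
  next
    fix u v assume "u \<in> \<phi> ` ({..<n} \<times> {..<n})" "v \<in> \<phi> ` ({..<n} \<times> {..<n})"
    then obtain a b c d where "a < n" "b < n" "c < n" "d < n" "u = \<phi> (a, b)" "v = \<phi> (c, d)"
      by auto
    then show "u + v \<in> \<phi> ` ({..<n} \<times> {..<n})"
      using additive[of a b c d] \<open>n > 0\<close>
      by (intro rev_image_eqI[of "((a + c) mod n, (b + d) mod n)"]) simp_all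
  next
    fix u assume "u \<in> \<phi> ` ({..<n} \<times> {..<n})"
    then obtain a b where "a < n" "b < n" "u = \<phi> (a, b)"
      by auto
    then show "- u \<in> \<phi> ` ({..<n} \<times> {..<n})"
      using minus[of a b] \<open>n > 0\<close>
      by (intro rev_image_eqI[of "((n - a) mod n, (n - b) mod n)"]) simp_all
  qed
qed

lemma is_subgroup_generated_subgroup: "is_subgroup (generated_subgroup S)"
  unfolding is_subgroup_def generated_subgroup_def by blast

lemma generated_subgroup_superset: "S \<subseteq> generated_subgroup S"
  unfolding generated_subgroup_def by blast

lemma generated_subgroup_minimal: "is_subgroup H \<Longrightarrow> S \<subseteq> H \<Longrightarrow> generated_subgroup S \<subseteq> H"
  unfolding generated_subgroup_def by blast

lemma isotropically_generated_subgroup: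
  assumes "isotropically_generated q" "is_subgroup H" "\<And>x. q x = 1 \<Longrightarrow> x \<in> H"
  shows "x \<in> H"
  using assms generated_subgroup_minimal[of H "{x. q x = 1}"]
  unfolding isotropically_generated_def by auto

lemma natmul_order_exists: "\<exists>d>0. natmul d (x::'a::{ab_group_add,finite}) = 0"
proof -
  have "\<not> inj (\<lambda>k. natmul k x)"
    using finite_imageD[of "\<lambda>k. natmul k x" UNIV] by auto
  then obtain i j where "i < j" "natmul i x = natmul j x"
    unfolding inj_def by (metis linorder_neqE_nat)
  moreover have "natmul j x = natmul (j - i) x + natmul i x"
    using \<open>i < j\<close> natmul_add[of "j - i" i x] by simp
  ultimately show ?thesis by (intro exI[of _ "j - i"]) auto
qed

lemma natmul_annihilator_exists: "\<exists>N>0. \<forall>x::'a::{ab_group_add,finite}. natmul N x = 0"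
proof -
  define d where "d x = (SOME d. d > 0 \<and> natmul d x = 0)" for x :: 'a
  have d: "d x > 0" "natmul (d x) x = 0" for x
    using someI_ex[OF natmul_order_exists[of x]] by (simp_all add: d_def)
  have "natmul (\<Prod>y\<in>UNIV. d y) x = 0" for x :: 'a
    by (rule natmul_eq_0_if_dvd[OF d(2)]) (simp add: dvd_prodI)
  moreover have "(\<Prod>y\<in>UNIV. d y) > 0"
    using d(1) by (simp add: prod_pos)
  ultimately show ?thesis by blast
qed

lemma
  fixes x :: "'a::{ab_group_add,finite}"
  shows group_exponent_pos: "group_exponent TYPE('a) > 0"
    and natmul_group_exponent: "natmul (group_exponent TYPE('a)) x = 0"
  using LeastI_ex[OF natmul_annihilator_exists[where 'a='a]]
  unfolding group_exponent_def by auto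

lemma group_exponent_least:
  assumes "0 < m" "m < group_exponent TYPE('a::{ab_group_add,finite})"
  shows "\<exists>y::'a. natmul m y \<noteq> 0"
  using assms not_less_Least[of m "\<lambda>N. N > 0 \<and> (\<forall>x::'a. natmul N x = 0)"]
  unfolding group_exponent_def by auto

section \<open>Roots of unity\<close>

lemma power_gcd_eq_one:
  fixes w :: "'a::monoid_mult"
  assumes "w ^ a = 1" "w ^ b = 1"
  shows "w ^ gcd a b = 1"
proof (cases "a = 0")
  case False
  then obtain u v where uv: "a * u = b * v + gcd a b" using bezout_nat by blast
  have "1 = w ^ (a * u)" by (simp add: power_mult assms)
  also have "\<dots> = w ^ gcd a b" by (simp add: uv power_add power_mult assms)
  finally show ?thesis ..
qed (simp add: assms)

lemma power_coprime_ne_one: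
  fixes w :: "'a::monoid_mult"
  assumes "w ^ n = 1" "r dvd n" "w ^ (n div r) \<noteq> 1" "coprime c r"
  shows "(w ^ c) ^ (n div r) \<noteq> 1"
proof
  assume "(w ^ c) ^ (n div r) = 1"
  obtain k where n: "n = r * k" using assms(2) by blast
  have "r \<noteq> 0" using assms(3) by (cases "r = 0") auto
  then have "n div r = k" using n by simp
  have "gcd (c * k) n = k"
    using assms(4) by (simp add: n gcd_mult_distrib_nat[symmetric] mult.commute[of _ k])
  then have "w ^ k = 1"
    using power_gcd_eq_one[of w "c * k" n] \<open>(w ^ c) ^ (n div r) = 1\<close> \<open>n div r = k\<close> assms(1)
    by (simp add: power_mult)
  then show False using assms(3) \<open>n div r = k\<close> by simp
qed

lemma power_product_ne_one:
  fixes u v :: "'a::comm_monoid_mult"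
  assumes "u ^ n = 1" "v ^ n = 1" "n = E * D" "r dvd E" "coprime D r" "v ^ (n div r) \<noteq> 1"
  shows "(u ^ (E * E) * v ^ (D * D)) ^ (n div r) \<noteq> 1"
proof -
  obtain e where E: "E = r * e" using assms(4) by blast
  have "r \<noteq> 0" using assms(6) by (cases "r = 0") auto
  then have "n div r = e * D"
    unfolding assms(3) E by simp
  then have "E * E * (n div r) = n * (E * e)"
    unfolding assms(3) by (simp add: ac_simps)
  then have "(u ^ (E * E)) ^ (n div r) = (u ^ n) ^ (E * e)"
    by (simp only: power_mult[symmetric])
  then have "(u ^ (E * E)) ^ (n div r) = 1"
    by (simp add: assms(1))
  moreover have "(v ^ (D * D)) ^ (n div r) \<noteq> 1"
    using power_coprime_ne_one[OF assms(2) _ assms(6), of "D * D"] assms(3-5) by simp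
  ultimately show ?thesis by (simp add: power_mult_distrib)
qed

lemma primitive_rootI:
  fixes w :: "'k::field"
  assumes "w ^ n = 1" "n > 0" "\<And>r. prime r \<Longrightarrow> r dvd n \<Longrightarrow> w ^ (n div r) \<noteq> 1"
  shows "primitive_root n w"
  unfolding primitive_root_def
proof (intro conjI allI impI notI)
  fix m assume m: "0 < m \<and> m < n" and "w ^ m = 1"
  define g where "g = gcd m n"
  have "w ^ g = 1" using power_gcd_eq_one[of w m n] assms(1) \<open>w ^ m = 1\<close> by (simp add: g_def)
  obtain j where j: "n = g * j" unfolding g_def by (metis gcd_dvd2 dvd_def)
  have "g \<le> m" using m by (simp add: g_def)
  then have "j \<noteq> 1" using j m by auto
  then obtain r where r: "prime r" "r dvd j" using prime_factor_nat by blast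
  then obtain i where "j = r * i" by blast
  then have "n div r = g * i" "r dvd n" using j r(1) by (simp_all add: prime_gt_0_nat)
  then have "w ^ (n div r) = 1" by (simp add: power_mult \<open>w ^ g = 1\<close>)
  then show False using assms(3) r(1) \<open>r dvd n\<close> by blast
qed fact

lemma primitive_root_power_inj:
  fixes z :: "'k::field"
  assumes "primitive_root n z" "i < n" "j < n" "z ^ i = z ^ j"
  shows "i = j"
proof -
  have "z \<noteq> 0" using assms(1,2) by (auto simp: primitive_root_def power_0_left)
  have "z ^ i \<noteq> z ^ j" if "i < j" "j < n" for i j
  proof
    assume "z ^ i = z ^ j"
    moreover have "z ^ (j - i) * z ^ i = z ^ j"
      using \<open>i < j\<close> by (simp add: power_add[symmetric])
    ultimately have "z ^ (j - i) * z ^ i = 1 * z ^ i" by simp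
    then have "z ^ (j - i) = 1" using \<open>z \<noteq> 0\<close> by simp
    then show False using assms(1) that by (simp add: primitive_root_def)
  qed
  then show ?thesis using assms(2-4) by (metis linorder_neqE_nat)
qed

lemma primitive_root_powers:
  fixes z w :: "'k::field"
  assumes "primitive_root n z" "n > 0" "w ^ n = 1"
  shows "\<exists>k. w = z ^ k"
proof -
  define p :: "'k poly" where "p = monom 1 n + [:-1:]"
  have roots: "{x. poly p x = 0} = {x. x ^ n = 1}" by (simp add: p_def poly_monom)
  have "degree p = n" using assms(2)
    unfolding p_def by (subst degree_add_eq_left) (auto simp: degree_monom_eq)
  then have "p \<noteq> 0" using assms(2) by auto
  have fin: "finite {x::'k. x ^ n = 1}" using poly_roots_finite[OF \<open>p \<noteq> 0\<close>] roots by simp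
  have card: "card {x::'k. x ^ n = 1} \<le> n"
    using card_poly_roots_bound[OF \<open>p \<noteq> 0\<close>] \<open>degree p = n\<close> roots by simp
  have sub: "(\<lambda>i. z ^ i) ` {..<n} \<subseteq> {x. x ^ n = 1}"
    using assms(1) by (auto simp: primitive_root_def power_mult[symmetric] mult.commute[of _ n] power_mult)
  have "inj_on (\<lambda>i. z ^ i) {..<n}"
    using primitive_root_power_inj[OF assms(1)] by (auto intro: inj_onI)
  then have "card ((\<lambda>i. z ^ i) ` {..<n}) = n" by (simp add: card_image)
  then have "(\<lambda>i. z ^ i) ` {..<n} = {x. x ^ n = 1}"
    using card_subset_eq[OF fin sub] card_mono[OF fin sub] card by simp
  then show ?thesis using assms(3) by blast
qed

lemma bilinear_congruence_solvable:
  fixes n k s t :: nat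
  assumes "n > 0"
  shows "\<exists>a<n. \<exists>b<n. n dvd k + a * b + s * a + t * b"
proof -
  \<comment> \<open>k + a b + s a + t b = (a + t) (b + s) + k - s t: take a + t = 1 and b + s = s t - k modulo n\<close>
  define u v where "u = (1 - int t) div int n" and "v = (int s * int t - int k - int s) div int n"
  define a b where "a = nat ((1 - int t) mod int n)"
    and "b = nat ((int s * int t - int k - int s) mod int n)"
  have a: "int a = 1 - int t - int n * u" and b: "int b = int s * int t - int k - int s - int n * v"
    using assms div_mult_mod_eq[of "1 - int t" "int n"]
      div_mult_mod_eq[of "int s * int t - int k - int s" "int n"]
    unfolding a_def b_def u_def v_def by (simp_all add: mult.commute eq_diff_eq)
  have "int (k + a * b + s * a + t * b) = int n * (- v - u * (int s * int t - int k - int n * v))"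
    by (simp add: a b algebra_simps)
  then have "n dvd k + a * b + s * a + t * b"
    by (metis dvdI of_nat_dvd_iff)
  moreover have "a < n" "b < n"
    using assms by (simp_all add: a_def b_def nat_less_iff)
  ultimately show ?thesis by blast
qed

section \<open>Quadratic forms\<close>

context
  fixes q :: "'a::ab_group_add \<Rightarrow> 'k::field"
  assumes quadratic: "quadratic_form q"
begin

lemma quadratic_form_nonzero: "q x \<noteq> 0"
  using quadratic by (simp add: quadratic_form_def)

lemma quadratic_form_minus: "q (- x) = q x"
  using quadratic by (simp add: quadratic_form_def)

lemma assoc_bilin_add_left: "assoc_bilin q (x + y) z = assoc_bilin q x z * assoc_bilin q y z"
  using quadratic by (simp add: quadratic_form_def)

lemma assoc_bilin_add_right: "assoc_bilin q x (y + z) = assoc_bilin q x y * assoc_bilin q x z"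
  using quadratic unfolding quadratic_form_def by blast

lemma assoc_bilin_commute: "assoc_bilin q x y = assoc_bilin q y x"
  by (simp add: assoc_bilin_def add.commute mult.commute)

lemma assoc_bilin_0_left [simp]: "assoc_bilin q 0 y = 1"
proof -
  have "assoc_bilin q 0 y = assoc_bilin q 0 y * assoc_bilin q 0 y"
    using assoc_bilin_add_left[of 0 0 y] by simp
  then show ?thesis by (simp add: assoc_bilin_def quadratic_form_nonzero)
qed

lemma assoc_bilin_0_right [simp]: "assoc_bilin q y 0 = 1"
  using assoc_bilin_commute by simp

lemma quadratic_form_0 [simp]: "q 0 = 1"
  using assoc_bilin_0_left[of 0] quadratic_form_nonzero[of 0] by (simp add: assoc_bilin_def)

lemma quadratic_form_add: "q (x + y) = q x * q y * assoc_bilin q x y"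
  by (simp add: assoc_bilin_def quadratic_form_nonzero)

lemma assoc_bilin_diag: "assoc_bilin q x x = q x ^ 2"
proof -
  have "assoc_bilin q x x * assoc_bilin q x (- x) = 1"
    using assoc_bilin_add_right[of x x "- x"] by simp
  moreover have "assoc_bilin q x (- x) = 1 / (q x * q x)"
    by (simp add: assoc_bilin_def quadratic_form_minus)
  ultimately show ?thesis
    using quadratic_form_nonzero[of x] by (simp add: field_simps power2_eq_square)
qed

lemma assoc_bilin_natmul_left: "assoc_bilin q (natmul k x) y = assoc_bilin q x y ^ k"
  by (induction k) (simp_all add: natmul_Suc assoc_bilin_add_left)

lemma assoc_bilin_natmul_right: "assoc_bilin q y (natmul k x) = assoc_bilin q y x ^ k"
  using assoc_bilin_natmul_left assoc_bilin_commute by metis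

lemma quadratic_form_natmul: "q (natmul k x) = q x ^ (k * k)"
proof (induction k)
  case (Suc k)
  have "q (natmul (Suc k) x) = q x * q x ^ (k * k) * (q x ^ 2) ^ k"
    by (simp add: natmul_Suc quadratic_form_add assoc_bilin_natmul_right assoc_bilin_diag Suc)
  also have "\<dots> = q x ^ (1 + k * k + 2 * k)"
    by (simp only: power_add power_mult power_one_right)
  also have "1 + k * k + 2 * k = Suc k * Suc k"
    by simp
  finally show ?case .
qed simp

lemma is_subgroup_assoc_bilin_kernel: "is_subgroup {y. assoc_bilin q x y = 1}"
  unfolding is_subgroup_def
proof (intro conjI ballI)
  fix y z assume "y \<in> {y. assoc_bilin q x y = 1}" "z \<in> {y. assoc_bilin q x y = 1}"
  then show "y + z \<in> {y. assoc_bilin q x y = 1}" by (simp add: assoc_bilin_add_right)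
next
  fix y assume "y \<in> {y. assoc_bilin q x y = 1}"
  then show "- y \<in> {y. assoc_bilin q x y = 1}"
    using assoc_bilin_add_right[of x y "- y"] by simp
qed simp

lemma isotropic_pair_combine:
  assumes annihilate: "\<And>a::'a. natmul (P * C) a = 0"
    and isotropic: "q x = 1" "q y = 1" "q s = 1" "q t = 1"
  shows "q (natmul P x + natmul C s) = 1" "q (natmul P y + natmul C t) = 1"
    and "assoc_bilin q (natmul P x + natmul C s) (natmul P y + natmul C t) =
      assoc_bilin q x y ^ (P * P) * assoc_bilin q s t ^ (C * C)"
proof -
  have orth: "assoc_bilin q (natmul P a) (natmul C b) = 1" for a b
  proof -
    have "assoc_bilin q (natmul P a) (natmul C b) = assoc_bilin q (natmul (P * C) a) b"
      by (simp add: assoc_bilin_natmul_left assoc_bilin_natmul_right power_mult)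
    then show ?thesis by (simp add: annihilate)
  qed
  then have orth': "assoc_bilin q (natmul C b) (natmul P a) = 1" for a b
    by (simp add: assoc_bilin_commute)
  show "q (natmul P x + natmul C s) = 1" "q (natmul P y + natmul C t) = 1"
    by (simp_all add: quadratic_form_add quadratic_form_natmul isotropic orth)
  show "assoc_bilin q (natmul P x + natmul C s) (natmul P y + natmul C t) =
      assoc_bilin q x y ^ (P * P) * assoc_bilin q s t ^ (C * C)"
    unfolding assoc_bilin_add_left assoc_bilin_add_right orth orth' mult_1_left mult_1_right
    by (simp add: assoc_bilin_natmul_left assoc_bilin_natmul_right power_mult)
qed

lemma contains_hyperbolic_subgroup:
  assumes "n > 0" and annihilate: "natmul n x = 0" "natmul n y = 0"
    and isotropic: "q x = 1" "q y = 1"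
    and primitive: "primitive_root n (assoc_bilin q x y)"
  shows "contains_metric_subgroup_iso q n (hyperbolic_form (assoc_bilin q x y))"
proof -
  define z where "z = assoc_bilin q x y"
  define \<phi> where "\<phi> = (\<lambda>(a, b). natmul a x + natmul b y)"
  have additive: "\<phi> ((a + c) mod n, (b + d) mod n) = \<phi> (a, b) + \<phi> (c, d)" for a b c d
    by (simp add: \<phi>_def natmul_mod annihilate natmul_add algebra_simps)
  have "assoc_bilin q x x = 1" "assoc_bilin q y y = 1" "assoc_bilin q y x = z"
    by (simp_all add: assoc_bilin_diag isotropic z_def assoc_bilin_commute)
  then have pair_x: "assoc_bilin q (\<phi> (a, b)) x = z ^ b"
    and pair_y: "assoc_bilin q (\<phi> (a, b)) y = z ^ a" for a b
    by (simp_all add: \<phi>_def assoc_bilin_add_left assoc_bilin_natmul_left z_def)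
  have "inj_on \<phi> ({..<n} \<times> {..<n})"
  proof (rule inj_onI, clarify)
    fix a b c d assume "a < n" "b < n" "c < n" "d < n" "\<phi> (a, b) = \<phi> (c, d)"
    then show "a = c \<and> b = d"
      using pair_x[of a b] pair_x[of c d] pair_y[of a b] pair_y[of c d]
        primitive_root_power_inj[OF primitive[folded z_def]] by metis
  qed
  moreover have "q (\<phi> (a, b)) = hyperbolic_form z (a, b)" for a b
    by (simp add: \<phi>_def hyperbolic_form_def quadratic_form_add quadratic_form_natmul isotropic
        assoc_bilin_natmul_left assoc_bilin_natmul_right z_def power_mult[symmetric] mult.commute)
  ultimately show ?thesis
    unfolding contains_metric_subgroup_iso_def z_def[symmetric]
    using is_subgroup_additive_image[of n \<phi>] additive \<open>n > 0\<close>
    by (intro exI[of _ "\<phi> ` ({..<n} \<times> {..<n})"] exI[of _ \<phi>]) (auto simp: bij_betw_def)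
qed

lemma isotropically_generated_if_hyperbolic:
  assumes "n > 0" and annihilate: "\<And>x::'a. natmul n x = 0" and pow_n: "\<And>x. q x ^ n = 1"
    and primitive: "primitive_root n z"
    and "contains_metric_subgroup_iso q n (hyperbolic_form z)"
  shows "isotropically_generated q"
proof -
  obtain \<phi> where
    additive: "\<And>a b c d. a < n \<Longrightarrow> b < n \<Longrightarrow> c < n \<Longrightarrow> d < n \<Longrightarrow>
      \<phi> ((a + c) mod n, (b + d) mod n) = \<phi> (a, b) + \<phi> (c, d)"
    and q_phi: "\<And>a b. a < n \<Longrightarrow> b < n \<Longrightarrow> q (\<phi> (a, b)) = z ^ (a * b)"
    using assms(5) unfolding contains_metric_subgroup_iso_def hyperbolic_form_def
    by (metis case_prod_conv lessThan_iff)
  define e\<^sub>1 e\<^sub>2 where "e\<^sub>1 = \<phi> (1 mod n, 0)" and "e\<^sub>2 = \<phi> (0, 1 mod n)"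
  have phi_split: "\<phi> (a, b) = \<phi> (a, 0) + \<phi> (0, b)" if "a < n" "b < n" for a b
    using additive[of a 0 0 b] that by simp
  have phi_left: "\<phi> (a, 0) = natmul a e\<^sub>1" if "a < n" for a
    unfolding e\<^sub>1_def
  proof (rule natmul_additive_mod[where f = "\<lambda>a. \<phi> (a, 0)", OF _ that])
    fix a c assume "a < n" "c < n"
    then show "\<phi> ((a + c) mod n, 0) = \<phi> (a, 0) + \<phi> (c, 0)"
      using additive[of a 0 c 0] by simp
  qed
  have phi_right: "\<phi> (0, b) = natmul b e\<^sub>2" if "b < n" for b
    unfolding e\<^sub>2_def
  proof (rule natmul_additive_mod[where f = "\<lambda>b. \<phi> (0, b)", OF _ that])
    fix b d assume "b < n" "d < n"
    then show "\<phi> (0, (b + d) mod n) = \<phi> (0, b) + \<phi> (0, d)"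
      using additive[of 0 b 0 d] by simp
  qed
  let ?G = "generated_subgroup {x. q x = 1}"
  have G: "is_subgroup ?G" by (rule is_subgroup_generated_subgroup)
  have isotropic_in_G: "x \<in> ?G" if "q x = 1" for x
    using generated_subgroup_superset[of "{x. q x = 1}"] that by blast
  have phi_in_G: "\<phi> (a, b) \<in> ?G" if "a < n" "b < n" for a b
  proof -
    have "\<phi> (a, 0) \<in> ?G" "\<phi> (0, b) \<in> ?G"
      using isotropic_in_G q_phi that \<open>n > 0\<close> by simp_all
    then show ?thesis
      using phi_split[OF that] G unfolding is_subgroup_def by metis
  qed
  have "x \<in> ?G" for x
  proof -
    have "assoc_bilin q x e ^ n = 1" for e
      using assoc_bilin_natmul_right[of x n e] by (simp add: annihilate)
    then obtain k s t where kst: "q x = z ^ k" "assoc_bilin q x e\<^sub>1 = z ^ s" "assoc_bilin q x e\<^sub>2 = z ^ t"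
      using primitive_root_powers[OF primitive \<open>n > 0\<close>] pow_n by metis
    obtain a b m where ab: "a < n" "b < n" "k + a * b + s * a + t * b = n * m"
      using bilinear_congruence_solvable[OF \<open>n > 0\<close>] by (metis dvdE)
    have phi_ab: "\<phi> (a, b) = natmul a e\<^sub>1 + natmul b e\<^sub>2"
      using phi_split[OF ab(1,2)] phi_left[OF ab(1)] phi_right[OF ab(2)] by simp
    have "assoc_bilin q x (\<phi> (a, b)) = z ^ (s * a + t * b)"
      by (simp add: phi_ab kst assoc_bilin_add_right assoc_bilin_natmul_right power_add power_mult)
    then have "q (x + \<phi> (a, b)) = z ^ k * z ^ (a * b) * z ^ (s * a + t * b)"
      by (simp add: quadratic_form_add kst q_phi ab)
    also have "\<dots> = z ^ (k + a * b + s * a + t * b)"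
      by (simp add: power_add)
    also have "\<dots> = 1"
      using primitive by (simp add: ab(3) power_mult primitive_root_def)
    finally have "x + \<phi> (a, b) \<in> ?G" by (rule isotropic_in_G)
    moreover have "- \<phi> (a, b) \<in> ?G"
      using phi_in_G[OF ab(1,2)] G unfolding is_subgroup_def by blast
    ultimately have "(x + \<phi> (a, b)) + - \<phi> (a, b) \<in> ?G"
      using G unfolding is_subgroup_def by blast
    then show ?thesis by simp
  qed
  then show ?thesis unfolding isotropically_generated_def by blast
qed

end

section \<open>Isotropically generated metric groups\<close>

context
  fixes n :: nat
  assumes exponent: "n = group_exponent TYPE('a::{ab_group_add,finite})"
begin

lemma natmul_exponent: "natmul n (x::'a) = 0"
  using natmul_group_exponent exponent by simp

lemma exponent_pos: "n > 0"
  using group_exponent_pos exponent by simp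

context
  fixes q :: "'a \<Rightarrow> 'k::field"
  assumes quadratic: "quadratic_form q"
begin

lemma assoc_bilin_pow_exponent: "assoc_bilin q x y ^ n = 1"
  using assoc_bilin_natmul_left[OF quadratic, of n x y]
  by (simp add: natmul_exponent assoc_bilin_0_left[OF quadratic])

lemma isotropically_generated_pow_exponent:
  assumes generated: "isotropically_generated q"
  shows "q x ^ n = 1"
proof -
  have "is_subgroup {x. q x ^ n = 1}"
    by (simp add: is_subgroup_def quadratic_form_add[OF quadratic] quadratic_form_minus[OF quadratic]
        quadratic_form_0[OF quadratic] power_mult_distrib assoc_bilin_pow_exponent)
  then show ?thesis
    using isotropically_generated_subgroup[OF generated, of "{x. q x ^ n = 1}" x] by simp
qed

lemma isotropic_pair_pow_ne_one:
  assumes nondegenerate: "nondegenerate q" and generated: "isotropically_generated q"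
    and "0 < m" "m < n"
  shows "\<exists>s t. q s = 1 \<and> q t = 1 \<and> assoc_bilin q s t ^ m \<noteq> 1"
proof -
  obtain s where "q s = 1" "natmul m s \<noteq> 0"
    using isotropically_generated_subgroup[OF generated is_subgroup_natmul_kernel, of m]
      group_exponent_least[of m] assms(3,4) exponent by auto
  then obtain y where "assoc_bilin q (natmul m s) y \<noteq> 1"
    using nondegenerate unfolding nondegenerate_def by blast
  then obtain t where "q t = 1" "assoc_bilin q (natmul m s) t \<noteq> 1"
    using isotropically_generated_subgroup[OF generated is_subgroup_assoc_bilin_kernel[OF quadratic]]
    by blast
  then show ?thesis
    using \<open>q s = 1\<close> by (auto simp: assoc_bilin_natmul_left[OF quadratic])
qed

lemma isotropic_pair_insert_prime:
  assumes nondegenerate: "nondegenerate q" and generated: "isotropically_generated q"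
    and xy: "q x = 1" "q y = 1" "\<forall>r'\<in>R. assoc_bilin q x y ^ (n div r') \<noteq> 1"
    and R: "R \<subseteq> {r. prime r \<and> r dvd n}" and r: "prime r" "r dvd n"
  shows "\<exists>x' y'. q x' = 1 \<and> q y' = 1 \<and>
    (\<forall>r'\<in>insert r R. assoc_bilin q x' y' ^ (n div r') \<noteq> 1)"
proof -
  have "0 < n div r" "n div r < n"
    using r exponent_pos prime_gt_1_nat[OF r(1)] by (auto simp: dvd_imp_le div_greater_zero_iff)
  then obtain s t where st: "q s = 1" "q t = 1" "assoc_bilin q s t ^ (n div r) \<noteq> 1"
    using isotropic_pair_pow_ne_one[OF nondegenerate generated] by blast
  \<comment> \<open>Split n into its r-primary part P and the cofactor C: in P x + C s the pair (x, y)
    survives at the primes of C and (s, t) at r, while the cross terms vanish.\<close>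
  define P where "P = r ^ multiplicity r n"
  obtain C where nPC: "n = P * C" and "\<not> r dvd C"
    using multiplicity_decompose'[of n r] exponent_pos prime_gt_1_nat[OF r(1)]
    unfolding P_def by force
  have "r dvd P"
    using multiplicity_gt_zero_iff[of n r] exponent_pos r prime_gt_1_nat[OF r(1)]
    unfolding P_def by (simp add: dvd_power)
  have "coprime C r"
    using prime_imp_coprime[OF r(1) \<open>\<not> r dvd C\<close>] by (simp add: coprime_commute)
  define x' y' where "x' = natmul P x + natmul C s" and "y' = natmul P y + natmul C t"
  have annihilate: "natmul (P * C) a = 0" for a :: 'a
    using natmul_exponent nPC by simp
  note combined = isotropic_pair_combine[OF quadratic annihilate xy(1,2) st(1,2),
      folded x'_def y'_def]
  let ?u = "assoc_bilin q x y" and ?v = "assoc_bilin q s t"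
  have "assoc_bilin q x' y' ^ (n div r') \<noteq> 1" if "r' \<in> insert r R" for r'
  proof (cases "r' = r")
    case True
    then show ?thesis
      using power_product_ne_one[of ?u n ?v P C r] assoc_bilin_pow_exponent nPC \<open>r dvd P\<close>
        \<open>coprime C r\<close> st(3) combined(3) by simp
  next
    case False
    then have r': "r' \<in> R" "prime r'" "r' dvd n" using that R by auto
    have "\<not> r' dvd P"
      using False primes_dvd_imp_eq[OF r'(2) r(1)] prime_dvd_power[OF r'(2)]
      unfolding P_def by blast
    then have "r' dvd C"
      using r'(2,3) nPC by (simp add: prime_dvd_mult_iff)
    have "coprime P r'"
      using prime_imp_coprime[OF r'(2) \<open>\<not> r' dvd P\<close>] by (simp add: coprime_commute)
    have "n = C * P"
      using nPC by (simp add: mult.commute)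
    have "(?v ^ (C * C) * ?u ^ (P * P)) ^ (n div r') \<noteq> 1"
      using power_product_ne_one[OF assoc_bilin_pow_exponent assoc_bilin_pow_exponent
          \<open>n = C * P\<close> \<open>r' dvd C\<close> \<open>coprime P r'\<close>] xy(3) r'(1) by blast
    then show ?thesis
      by (simp add: combined(3) mult.commute)
  qed
  then show ?thesis using combined(1,2) by blast
qed

lemma isotropic_pair_avoiding_prime_divisors:
  assumes nondegenerate: "nondegenerate q" and generated: "isotropically_generated q"
    and "R \<subseteq> {r. prime r \<and> r dvd n}"
  shows "\<exists>x y. q x = 1 \<and> q y = 1 \<and> (\<forall>r\<in>R. assoc_bilin q x y ^ (n div r) \<noteq> 1)"
proof -
  have "finite R"
    using assms(3) exponent_pos by (auto intro: finite_subset[of _ "{..n}"] dvd_imp_le)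
  then show ?thesis using assms(3)
  proof (induction R rule: finite_induct)
    case empty
    show ?case using quadratic_form_0[OF quadratic] by blast
  next
    case (insert r R)
    then obtain x y where xy: "q x = 1" "q y = 1" "\<forall>r'\<in>R. assoc_bilin q x y ^ (n div r') \<noteq> 1"
      by blast
    show ?case
      using insert.prems by (intro isotropic_pair_insert_prime[OF nondegenerate generated xy]) auto
  qed
qed

lemma isotropic_pair_primitive:
  assumes "nondegenerate q" "isotropically_generated q"
  shows "\<exists>x y. q x = 1 \<and> q y = 1 \<and> primitive_root n (assoc_bilin q x y)"
  using isotropic_pair_avoiding_prime_divisors[OF assms, of "{r. prime r \<and> r dvd n}"]
    primitive_rootI[OF assoc_bilin_pow_exponent exponent_pos] by blast

end

end

theorem theorem6p2:
  fixes q :: "'a::{ab_group_add,finite} \<Rightarrow> 'k::field_char_0"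
  assumes "alg_closed TYPE('k)"
    and "metric_group q"
    and "n = group_exponent TYPE('a)"
  shows "isotropically_generated q \<longleftrightarrow>
           ((\<forall>x. q x ^ n = 1) \<and>
            (\<exists>\<zeta>. primitive_root n \<zeta> \<and> contains_metric_subgroup_iso q n (hyperbolic_form \<zeta>)))"
proof -
  \<comment> \<open>The argument works over any field: algebraic closure and characteristic 0 are not used.\<close>
  have quadratic: "quadratic_form q" and nondegenerate: "nondegenerate q"
    using assms(2) by (simp_all add: metric_group_def)
  note exponent = assms(3)
  show ?thesis
  proof
    assume generated: "isotropically_generated q"
    then show "(\<forall>x. q x ^ n = 1) \<and>
        (\<exists>\<zeta>. primitive_root n \<zeta> \<and> contains_metric_subgroup_iso q n (hyperbolic_form \<zeta>))"
      using isotropic_pair_primitive[OF exponent quadratic nondegenerate generated]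
        isotropically_generated_pow_exponent[OF exponent quadratic generated]
        contains_hyperbolic_subgroup[OF quadratic exponent_pos[OF exponent]
          natmul_exponent[OF exponent] natmul_exponent[OF exponent]]
      by blast
  next
    assume "(\<forall>x. q x ^ n = 1) \<and>
        (\<exists>\<zeta>. primitive_root n \<zeta> \<and> contains_metric_subgroup_iso q n (hyperbolic_form \<zeta>))"
    then show "isotropically_generated q"
      using isotropically_generated_if_hyperbolic[OF quadratic exponent_pos[OF exponent]
          natmul_exponent[OF exponent]]
      by blast
  qed
qed

end
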